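(* Let $0 \neq q \in \mathbb{C}$ with $q^{2} \neq 1$, and let $a, b, c$ be elements of an associative algebra over $\mathbb{C}$ satisfying $$ab = q\, ba + c, \qquad ac = q^{2} ca, \qquad cb = q^{2} bc.$$ Then for every $n \in \mathbb{N}$, $$(a + b)^{n} = \sum_{\substack{\alpha,\beta,\gamma \in \mathbb{Z}_{+}\\ \alpha + 2\beta + \gamma = n}} \frac{ [n]_{q}! }{ [\alpha]_{q}!\, [\gamma]_{q}!\, [2]_{q} [4]_{q} \cdots [2\beta]_{q} }\; b^{\alpha}c^{\beta} a^{\gamma},$$ where the product $[2]_{q}[4]_{q}\cdots[2\beta]_{q}$ is interpreted as $1$ when $\beta = 0$.
   Context: $\mathbb{N} = \{1,2,3,\ldots\}$ and $\mathbb{Z}_{+} = \mathbb{N}\cup\{0\}$. For $0 \neq q \in \mathbb{C}$ with $q^2 \neq 1$ and $n \in \mathbb{Z}_{+}$: $[n]_{q} = \frac{1-q^{n}}{1-q}$, $[n]_{q}! = [n]_{q}[n-1]_{q}\cdots[1]_{q}$, and $[0]_{q}! = 1$.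
   Formalization: The q-numbers $[k]_{q}$ for 1 <= k <= n are also assumed nonzero, so every denominator in the formula for $(a + b)^{n}$ is nonzero. The statement above fails without it. *)

theory Defs
  imports Complex_Main
begin

class scaleC =
  fixes scaleC :: "complex \<Rightarrow> 'a \<Rightarrow> 'a" (infixr "*\<^sub>C" 75)

class complex_algebra_1 = ring_1 + scaleC +
  assumes scaleC_add_right: "r *\<^sub>C (x + y) = r *\<^sub>C x + r *\<^sub>C y"
    and scaleC_add_left: "(r + s) *\<^sub>C x = r *\<^sub>C x + s *\<^sub>C x"
    and scaleC_scaleC: "r *\<^sub>C (s *\<^sub>C x) = (r * s) *\<^sub>C x"
    and scaleC_one: "1 *\<^sub>C x = x"
    and mult_scaleC_left: "(r *\<^sub>C x) * y = r *\<^sub>C (x * y)"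
    and mult_scaleC_right: "x * (r *\<^sub>C y) = r *\<^sub>C (x * y)"

definition qint :: "complex \<Rightarrow> nat \<Rightarrow> complex" where
  "qint q n = (1 - q ^ n) / (1 - q)"

definition qfact :: "complex \<Rightarrow> nat \<Rightarrow> complex" where
  "qfact q n = (\<Prod>k = 1..n. qint q k)"

definition qeven_prod :: "complex \<Rightarrow> nat \<Rightarrow> complex" where
  "qeven_prod q \<beta> = (\<Prod>j = 1..\<beta>. qint q (2 * j))"

end

theory Submission
  imports Defs
begin

text \<open>
  Multiply the expansion of \<open>(a + b)^n\<close> on the left by \<open>a + b\<close>. The relations move \<open>a\<close>
  through a monomial:
  \<open>a b^\<alpha> c^\<beta> = q^(\<alpha>+2\<beta>) b^\<alpha> c^\<beta> a + q^(\<alpha>-1) [\<alpha>]_q b^(\<alpha>-1) c^(\<beta>+1)\<close>.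
  So the monomial \<open>b^\<alpha> c^\<beta> a^\<gamma>\<close> of weight \<open>\<alpha> + 2\<beta> + \<gamma> = n + 1\<close> collects three
  contributions from weight \<open>n\<close>, and the claimed coefficients obey this recursion because
  \<open>[\<alpha>]_q + q^\<alpha> [2\<beta>]_q + q^(\<alpha>+2\<beta>) [\<gamma>]_q = [n+1]_q\<close>.
\<close>

context complex_algebra_1
begin

lemma scaleC_zero_left [simp]: "0 *\<^sub>C x = 0"
  using scaleC_add_left [of 0 0 x] by simp

lemma scaleC_zero_right [simp]: "r *\<^sub>C 0 = 0"
  using scaleC_add_right [of r 0 0] by simp

end

lemma sum_if_reindex_bij_betw:
  assumes "finite A" "finite B" "bij_betw \<sigma> {x\<in>A. P x} {y\<in>B. Q y}"
  shows "(\<Sum>x\<in>A. if P x then h (\<sigma> x) else 0) = (\<Sum>y\<in>B. if Q y then h y else 0)"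
  using sum.reindex_bij_betw [OF assms(3), of h] assms(1,2) by (simp add: sum.inter_filter)

definition exponent_triples :: "nat \<Rightarrow> (nat \<times> nat \<times> nat) set" where
  "exponent_triples n = {(\<alpha>, \<beta>, \<gamma>). \<alpha> + 2 * \<beta> + \<gamma> = n}"

lemma finite_exponent_triples [simp]: "finite (exponent_triples n)"
  by (rule finite_subset [of _ "{0..n} \<times> {0..n} \<times> {0..n}"]) (auto simp: exponent_triples_def)

lemma sum_exponent_triples_shift_alpha:
  "(\<Sum>(\<alpha>, \<beta>, \<gamma>)\<in>exponent_triples n. h (Suc \<alpha>) \<beta> \<gamma>)
    = (\<Sum>(\<alpha>, \<beta>, \<gamma>)\<in>exponent_triples (Suc n). if 0 < \<alpha> then h \<alpha> \<beta> \<gamma> else 0)"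
proof -
  have "bij_betw (\<lambda>(\<alpha>, \<beta>, \<gamma>). (Suc \<alpha>, \<beta>, \<gamma>))
      {x\<in>exponent_triples n. True} {y\<in>exponent_triples (Suc n). 0 < fst y}"
    by (rule bij_betw_byWitness [where f' = "\<lambda>(\<alpha>, \<beta>, \<gamma>). (\<alpha> - 1, \<beta>, \<gamma>)"])
      (auto simp: exponent_triples_def)
  from sum_if_reindex_bij_betw [OF _ _ this, of "\<lambda>(\<alpha>, \<beta>, \<gamma>). h \<alpha> \<beta> \<gamma>"]
  show ?thesis by (simp add: case_prod_beta cong: if_cong)
qed

lemma sum_exponent_triples_shift_gamma:
  "(\<Sum>(\<alpha>, \<beta>, \<gamma>)\<in>exponent_triples n. h \<alpha> \<beta> (Suc \<gamma>))
    = (\<Sum>(\<alpha>, \<beta>, \<gamma>)\<in>exponent_triples (Suc n). if 0 < \<gamma> then h \<alpha> \<beta> \<gamma> else 0)"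
proof -
  have "bij_betw (\<lambda>(\<alpha>, \<beta>, \<gamma>). (\<alpha>, \<beta>, Suc \<gamma>))
      {x\<in>exponent_triples n. True} {y\<in>exponent_triples (Suc n). 0 < snd (snd y)}"
    by (rule bij_betw_byWitness [where f' = "\<lambda>(\<alpha>, \<beta>, \<gamma>). (\<alpha>, \<beta>, \<gamma> - 1)"])
      (auto simp: exponent_triples_def)
  from sum_if_reindex_bij_betw [OF _ _ this, of "\<lambda>(\<alpha>, \<beta>, \<gamma>). h \<alpha> \<beta> \<gamma>"]
  show ?thesis by (simp add: case_prod_beta cong: if_cong)
qed

lemma sum_exponent_triples_trade_alpha_for_beta:
  "(\<Sum>(\<alpha>, \<beta>, \<gamma>)\<in>exponent_triples n. if 0 < \<alpha> then h (\<alpha> - 1) (Suc \<beta>) \<gamma> else 0)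
    = (\<Sum>(\<alpha>, \<beta>, \<gamma>)\<in>exponent_triples (Suc n). if 0 < \<beta> then h \<alpha> \<beta> \<gamma> else 0)"
proof -
  have "bij_betw (\<lambda>(\<alpha>, \<beta>, \<gamma>). (\<alpha> - 1, Suc \<beta>, \<gamma>))
      {x\<in>exponent_triples n. 0 < fst x} {y\<in>exponent_triples (Suc n). 0 < fst (snd y)}"
    by (rule bij_betw_byWitness [where f' = "\<lambda>(\<alpha>, \<beta>, \<gamma>). (Suc \<alpha>, \<beta> - 1, \<gamma>)"])
      (auto simp: exponent_triples_def)
  from sum_if_reindex_bij_betw [OF _ _ this, of "\<lambda>(\<alpha>, \<beta>, \<gamma>). h \<alpha> \<beta> \<gamma>"]
  show ?thesis by (simp add: case_prod_beta cong: if_cong)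
qed

lemma qint_0 [simp]: "qint q 0 = 0"
  by (simp add: qint_def)

lemma qint_Suc_0: "q \<noteq> 1 \<Longrightarrow> qint q (Suc 0) = 1"
  by (simp add: qint_def)

lemma qint_add: "qint q (m + k) = qint q m + q ^ m * qint q k"
  by (cases "q = 1") (simp_all add: qint_def field_simps power_add)

lemma qfact_Suc: "qfact q (Suc k) = qfact q k * qint q (Suc k)"
  by (simp add: qfact_def)

lemma qeven_prod_Suc: "qeven_prod q (Suc k) = qeven_prod q k * qint q (2 * Suc k)"
  by (simp add: qeven_prod_def)

lemma qfact_nonzero: "\<forall>k\<in>{1..N}. qint q k \<noteq> 0 \<Longrightarrow> m \<le> N \<Longrightarrow> qfact q m \<noteq> 0"
  by (auto simp: qfact_def)

lemma qeven_prod_nonzero: "\<forall>k\<in>{1..N}. qint q k \<noteq> 0 \<Longrightarrow> 2 * m \<le> N \<Longrightarrow> qeven_prod q m \<noteq> 0"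
  by (auto simp: qeven_prod_def)

definition expansion_coeff :: "complex \<Rightarrow> nat \<Rightarrow> nat \<Rightarrow> nat \<Rightarrow> nat \<Rightarrow> complex" where
  "expansion_coeff q n \<alpha> \<beta> \<gamma> = qfact q n / (qfact q \<alpha> * qfact q \<gamma> * qeven_prod q \<beta>)"

definition expansion_step ::
    "complex \<Rightarrow> (nat \<Rightarrow> nat \<Rightarrow> nat \<Rightarrow> complex) \<Rightarrow> nat \<Rightarrow> nat \<Rightarrow> nat \<Rightarrow> complex" where
  "expansion_step q f \<alpha> \<beta> \<gamma> =
      (if 0 < \<alpha> then f (\<alpha> - 1) \<beta> \<gamma> else 0)
    + (if 0 < \<gamma> then q ^ (\<alpha> + 2 * \<beta>) * f \<alpha> \<beta> (\<gamma> - 1) else 0)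
    + (if 0 < \<beta> then q ^ \<alpha> * qint q (Suc \<alpha>) * f (Suc \<alpha>) (\<beta> - 1) \<gamma> else 0)"

context
  fixes q :: complex and n :: nat
  assumes qint_nonzero: "\<forall>k\<in>{1..Suc n}. qint q k \<noteq> 0"
begin

lemma expansion_coeff_Suc_alpha:
  assumes "Suc \<alpha> + 2 * \<beta> + \<gamma> = Suc n"
  shows "qint q (Suc n) * expansion_coeff q n \<alpha> \<beta> \<gamma>
    = qint q (Suc \<alpha>) * expansion_coeff q (Suc n) (Suc \<alpha>) \<beta> \<gamma>"
  using assms qint_nonzero qfact_nonzero [OF qint_nonzero] qeven_prod_nonzero [OF qint_nonzero]
  by (simp add: expansion_coeff_def qfact_Suc field_simps)

lemma expansion_coeff_Suc_gamma:
  assumes "\<alpha> + 2 * \<beta> + Suc \<gamma> = Suc n"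
  shows "qint q (Suc n) * expansion_coeff q n \<alpha> \<beta> \<gamma>
    = qint q (Suc \<gamma>) * expansion_coeff q (Suc n) \<alpha> \<beta> (Suc \<gamma>)"
  using assms qint_nonzero qfact_nonzero [OF qint_nonzero] qeven_prod_nonzero [OF qint_nonzero]
  by (simp add: expansion_coeff_def qfact_Suc field_simps)

lemma expansion_coeff_Suc_beta:
  assumes "\<alpha> + 2 * Suc \<beta> + \<gamma> = Suc n"
  shows "qint q (Suc n) * (qint q (Suc \<alpha>) * expansion_coeff q n (Suc \<alpha>) \<beta> \<gamma>)
    = qint q (2 * Suc \<beta>) * expansion_coeff q (Suc n) \<alpha> (Suc \<beta>) \<gamma>"
  using assms qint_nonzero qfact_nonzero [OF qint_nonzero] qeven_prod_nonzero [OF qint_nonzero]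
  by (simp add: expansion_coeff_def qfact_Suc qeven_prod_Suc field_simps)

lemma expansion_step_expansion_coeff:
  assumes weight: "\<alpha> + 2 * \<beta> + \<gamma> = Suc n"
  shows "expansion_step q (expansion_coeff q n) \<alpha> \<beta> \<gamma> = expansion_coeff q (Suc n) \<alpha> \<beta> \<gamma>"
proof -
  let ?K = "expansion_coeff q n" and ?K' = "expansion_coeff q (Suc n) \<alpha> \<beta> \<gamma>"
  have from_alpha: "qint q (Suc n) * (if 0 < \<alpha> then ?K (\<alpha> - 1) \<beta> \<gamma> else 0) = qint q \<alpha> * ?K'"
    using weight expansion_coeff_Suc_alpha by (cases \<alpha>) simp_all
  have from_gamma: "qint q (Suc n) * (if 0 < \<gamma> then ?K \<alpha> \<beta> (\<gamma> - 1) else 0) = qint q \<gamma> * ?K'"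
    using weight expansion_coeff_Suc_gamma by (cases \<gamma>) simp_all
  have from_beta: "qint q (Suc n) * (if 0 < \<beta> then qint q (Suc \<alpha>) * ?K (Suc \<alpha>) (\<beta> - 1) \<gamma> else 0)
      = qint q (2 * \<beta>) * ?K'"
    using weight expansion_coeff_Suc_beta by (cases \<beta>) simp_all
  have "qint q (Suc n) * expansion_step q ?K \<alpha> \<beta> \<gamma>
      = qint q (Suc n) * (if 0 < \<alpha> then ?K (\<alpha> - 1) \<beta> \<gamma> else 0)
      + q ^ (\<alpha> + 2 * \<beta>) * (qint q (Suc n) * (if 0 < \<gamma> then ?K \<alpha> \<beta> (\<gamma> - 1) else 0))
      + q ^ \<alpha> * (qint q (Suc n) *
          (if 0 < \<beta> then qint q (Suc \<alpha>) * ?K (Suc \<alpha>) (\<beta> - 1) \<gamma> else 0))"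
    by (simp add: expansion_step_def algebra_simps)
  also have "\<dots> = (qint q \<alpha> + q ^ \<alpha> * qint q (2 * \<beta>) + q ^ (\<alpha> + 2 * \<beta>) * qint q \<gamma>) * ?K'"
    unfolding from_alpha from_gamma from_beta by (simp add: algebra_simps)
  also have "\<dots> = qint q (Suc n) * ?K'"
    by (simp add: qint_add [symmetric] weight)
  finally show ?thesis
    using qint_nonzero by simp
qed

end

locale q_commuting_triple =
  fixes q :: complex and a b c :: "'a::complex_algebra_1"
  assumes q_neq_1: "q \<noteq> 1"
    and ab: "a * b = q *\<^sub>C (b * a) + c"
    and ac: "a * c = (q ^ 2) *\<^sub>C (c * a)"
    and cb: "c * b = (q ^ 2) *\<^sub>C (b * c)"
begin

lemma a_mult_b_power:
  "a * b ^ Suc k = q ^ Suc k *\<^sub>C (b ^ Suc k * a) + (q ^ k * qint q (Suc k)) *\<^sub>C (b ^ k * c)"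
proof (induction k)
  case 0
  show ?case
    using ab q_neq_1 by (simp add: qint_Suc_0 scaleC_one)
next
  case (Suc k)
  have b_ab: "b ^ Suc k * (a * b) = q *\<^sub>C (b ^ Suc (Suc k) * a) + b ^ Suc k * c"
    unfolding ab by (simp only: distrib_left mult_scaleC_right mult.assoc [symmetric] power_Suc2)
  have b_cb: "b ^ k * (c * b) = q ^ 2 *\<^sub>C (b ^ Suc k * c)"
    unfolding cb by (simp only: mult_scaleC_right mult.assoc [symmetric] power_Suc2)
  have "a * b ^ Suc (Suc k) = (a * b ^ Suc k) * b"
    by (simp only: power_Suc2 [of b "Suc k"] mult.assoc)
  also have "\<dots> = q ^ Suc k *\<^sub>C (b ^ Suc k * (a * b)) + (q ^ k * qint q (Suc k)) *\<^sub>C (b ^ k * (c * b))"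
    unfolding Suc by (simp add: distrib_right mult_scaleC_left mult.assoc)
  also have "\<dots> = q ^ Suc (Suc k) *\<^sub>C (b ^ Suc (Suc k) * a)
      + (q ^ Suc k + q ^ k * qint q (Suc k) * q ^ 2) *\<^sub>C (b ^ Suc k * c)"
    unfolding b_ab b_cb by (simp add: scaleC_add_right scaleC_add_left scaleC_scaleC add.assoc mult_ac)
  also have "q ^ Suc k + q ^ k * qint q (Suc k) * q ^ 2 = q ^ Suc k * qint q (Suc (Suc k))"
    using qint_add [of q 1 "Suc k"] q_neq_1 by (simp add: qint_Suc_0 power2_eq_square algebra_simps)
  finally show ?case .
qed

lemma a_mult_c_power: "a * c ^ k = q ^ (2 * k) *\<^sub>C (c ^ k * a)"
proof (induction k)
  case 0
  show ?case by (simp add: scaleC_one)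
next
  case (Suc k)
  have "a * c ^ Suc k = (a * c) * c ^ k"
    by (simp add: mult.assoc)
  also have "\<dots> = q ^ 2 *\<^sub>C (c * (a * c ^ k))"
    unfolding ac by (simp add: mult_scaleC_left mult.assoc)
  also have "\<dots> = q ^ (2 * Suc k) *\<^sub>C (c ^ Suc k * a)"
    unfolding Suc by (simp add: mult_scaleC_right scaleC_scaleC mult.assoc power_add [symmetric])
  finally show ?case .
qed

lemma a_mult_monomial:
  "a * (b ^ \<alpha> * c ^ \<beta> * a ^ \<gamma>) = q ^ (\<alpha> + 2 * \<beta>) *\<^sub>C (b ^ \<alpha> * c ^ \<beta> * a ^ Suc \<gamma>)
    + (if 0 < \<alpha> then (q ^ (\<alpha> - 1) * qint q \<alpha>) *\<^sub>C (b ^ (\<alpha> - 1) * c ^ Suc \<beta> * a ^ \<gamma>) else 0)"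
proof (cases \<alpha>)
  case 0
  have "a * (c ^ \<beta> * a ^ \<gamma>) = (a * c ^ \<beta>) * a ^ \<gamma>"
    by (simp add: mult.assoc)
  then show ?thesis
    using 0 by (simp add: a_mult_c_power mult_scaleC_left mult.assoc)
next
  case (Suc k)
  have "a * (b ^ \<alpha> * c ^ \<beta> * a ^ \<gamma>) = (a * b ^ Suc k) * c ^ \<beta> * a ^ \<gamma>"
    using Suc by (simp add: mult.assoc)
  also have "\<dots> = q ^ Suc k *\<^sub>C (b ^ Suc k * (a * c ^ \<beta>) * a ^ \<gamma>)
      + (q ^ k * qint q (Suc k)) *\<^sub>C (b ^ k * c ^ Suc \<beta> * a ^ \<gamma>)"
    unfolding a_mult_b_power by (simp add: distrib_right mult_scaleC_left mult.assoc)
  finally show ?thesis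
    using Suc by (simp add: a_mult_c_power mult_scaleC_left mult_scaleC_right scaleC_scaleC
        mult.assoc power_add)
qed

lemma a_plus_b_mult_monomial:
  "(a + b) * (k *\<^sub>C (b ^ \<alpha> * c ^ \<beta> * a ^ \<gamma>))
    = (q ^ (\<alpha> + 2 * \<beta>) * k) *\<^sub>C (b ^ \<alpha> * c ^ \<beta> * a ^ Suc \<gamma>)
    + (if 0 < \<alpha> then (q ^ (\<alpha> - 1) * qint q \<alpha> * k) *\<^sub>C (b ^ (\<alpha> - 1) * c ^ Suc \<beta> * a ^ \<gamma>) else 0)
    + k *\<^sub>C (b ^ Suc \<alpha> * c ^ \<beta> * a ^ \<gamma>)"
  unfolding distrib_right mult_scaleC_right a_mult_monomial
  by (simp add: scaleC_add_right scaleC_scaleC mult.assoc mult_ac)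

lemma left_mult_expansion:
  "(a + b) * (\<Sum>(\<alpha>, \<beta>, \<gamma>)\<in>exponent_triples n. f \<alpha> \<beta> \<gamma> *\<^sub>C (b ^ \<alpha> * c ^ \<beta> * a ^ \<gamma>))
    = (\<Sum>(\<alpha>, \<beta>, \<gamma>)\<in>exponent_triples (Suc n).
        expansion_step q f \<alpha> \<beta> \<gamma> *\<^sub>C (b ^ \<alpha> * c ^ \<beta> * a ^ \<gamma>))"
proof -
  define T where "T = exponent_triples"
  define m where "m \<alpha> \<beta> \<gamma> = b ^ \<alpha> * c ^ \<beta> * a ^ \<gamma>" for \<alpha> \<beta> \<gamma>
  have "(a + b) * (\<Sum>(\<alpha>, \<beta>, \<gamma>)\<in>T n. f \<alpha> \<beta> \<gamma> *\<^sub>C m \<alpha> \<beta> \<gamma>)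
      = (\<Sum>(\<alpha>, \<beta>, \<gamma>)\<in>T n. (q ^ (\<alpha> + 2 * \<beta>) * f \<alpha> \<beta> \<gamma>) *\<^sub>C m \<alpha> \<beta> (Suc \<gamma>))
      + (\<Sum>(\<alpha>, \<beta>, \<gamma>)\<in>T n. if 0 < \<alpha>
          then (q ^ (\<alpha> - 1) * qint q \<alpha> * f \<alpha> \<beta> \<gamma>) *\<^sub>C m (\<alpha> - 1) (Suc \<beta>) \<gamma> else 0)
      + (\<Sum>(\<alpha>, \<beta>, \<gamma>)\<in>T n. f \<alpha> \<beta> \<gamma> *\<^sub>C m (Suc \<alpha>) \<beta> \<gamma>)"
    unfolding sum_distrib_left sum.distrib [symmetric] m_def
    by (simp add: a_plus_b_mult_monomial case_prod_beta)
  also have "(\<Sum>(\<alpha>, \<beta>, \<gamma>)\<in>T n. (q ^ (\<alpha> + 2 * \<beta>) * f \<alpha> \<beta> \<gamma>) *\<^sub>C m \<alpha> \<beta> (Suc \<gamma>))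
      = (\<Sum>(\<alpha>, \<beta>, \<gamma>)\<in>T (Suc n). if 0 < \<gamma>
          then (q ^ (\<alpha> + 2 * \<beta>) * f \<alpha> \<beta> (\<gamma> - 1)) *\<^sub>C m \<alpha> \<beta> \<gamma> else 0)"
    (is "_ = ?from_gamma")
    using sum_exponent_triples_shift_gamma
      [of "\<lambda>\<alpha> \<beta> \<gamma>. (q ^ (\<alpha> + 2 * \<beta>) * f \<alpha> \<beta> (\<gamma> - 1)) *\<^sub>C m \<alpha> \<beta> \<gamma>"]
    by (simp add: T_def)
  also have "(\<Sum>(\<alpha>, \<beta>, \<gamma>)\<in>T n. if 0 < \<alpha>
          then (q ^ (\<alpha> - 1) * qint q \<alpha> * f \<alpha> \<beta> \<gamma>) *\<^sub>C m (\<alpha> - 1) (Suc \<beta>) \<gamma> else 0)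
      = (\<Sum>(\<alpha>, \<beta>, \<gamma>)\<in>T (Suc n). if 0 < \<beta>
          then (q ^ \<alpha> * qint q (Suc \<alpha>) * f (Suc \<alpha>) (\<beta> - 1) \<gamma>) *\<^sub>C m \<alpha> \<beta> \<gamma> else 0)"
    (is "_ = ?from_beta")
    using sum_exponent_triples_trade_alpha_for_beta
      [of "\<lambda>\<alpha> \<beta> \<gamma>. (q ^ \<alpha> * qint q (Suc \<alpha>) * f (Suc \<alpha>) (\<beta> - 1) \<gamma>) *\<^sub>C m \<alpha> \<beta> \<gamma>"]
    by (simp add: T_def cong: if_cong)
  also have "(\<Sum>(\<alpha>, \<beta>, \<gamma>)\<in>T n. f \<alpha> \<beta> \<gamma> *\<^sub>C m (Suc \<alpha>) \<beta> \<gamma>)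
      = (\<Sum>(\<alpha>, \<beta>, \<gamma>)\<in>T (Suc n). if 0 < \<alpha> then f (\<alpha> - 1) \<beta> \<gamma> *\<^sub>C m \<alpha> \<beta> \<gamma> else 0)"
    (is "_ = ?from_alpha")
    using sum_exponent_triples_shift_alpha [of "\<lambda>\<alpha> \<beta> \<gamma>. f (\<alpha> - 1) \<beta> \<gamma> *\<^sub>C m \<alpha> \<beta> \<gamma>"]
    by (simp add: T_def)
  also have "?from_gamma + ?from_beta + ?from_alpha
      = (\<Sum>(\<alpha>, \<beta>, \<gamma>)\<in>T (Suc n). expansion_step q f \<alpha> \<beta> \<gamma> *\<^sub>C m \<alpha> \<beta> \<gamma>)"
    unfolding sum.distrib [symmetric]
    by (rule sum.cong) (auto simp: expansion_step_def scaleC_add_left)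
  finally show ?thesis
    by (simp only: T_def m_def)
qed

theorem power_expansion:
  assumes "\<forall>k\<in>{1..n}. qint q k \<noteq> 0"
  shows "(a + b) ^ n = (\<Sum>(\<alpha>, \<beta>, \<gamma>)\<in>exponent_triples n.
      expansion_coeff q n \<alpha> \<beta> \<gamma> *\<^sub>C (b ^ \<alpha> * c ^ \<beta> * a ^ \<gamma>))"
  using assms
proof (induction n)
  case 0
  have "exponent_triples 0 = {(0, 0, 0)}"
    by (auto simp: exponent_triples_def)
  then show ?case
    by (simp add: expansion_coeff_def qfact_def qeven_prod_def scaleC_one)
next
  case (Suc n)
  have "(a + b) ^ Suc n = (a + b) * (\<Sum>(\<alpha>, \<beta>, \<gamma>)\<in>exponent_triples n.
      expansion_coeff q n \<alpha> \<beta> \<gamma> *\<^sub>C (b ^ \<alpha> * c ^ \<beta> * a ^ \<gamma>))"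
    using Suc by simp
  also have "\<dots> = (\<Sum>(\<alpha>, \<beta>, \<gamma>)\<in>exponent_triples (Suc n).
      expansion_step q (expansion_coeff q n) \<alpha> \<beta> \<gamma> *\<^sub>C (b ^ \<alpha> * c ^ \<beta> * a ^ \<gamma>))"
    by (rule left_mult_expansion)
  also have "\<dots> = (\<Sum>(\<alpha>, \<beta>, \<gamma>)\<in>exponent_triples (Suc n).
      expansion_coeff q (Suc n) \<alpha> \<beta> \<gamma> *\<^sub>C (b ^ \<alpha> * c ^ \<beta> * a ^ \<gamma>))"
    using expansion_step_expansion_coeff [OF Suc.prems]
    by (intro sum.cong) (auto simp: exponent_triples_def)
  finally show ?case .
qed

end

theorem lemma1:
  fixes q :: complex and a b c :: "'a :: complex_algebra_1" and n :: nat
  assumes "q \<noteq> 0" and "q ^ 2 \<noteq> 1"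
    and "a * b = q *\<^sub>C (b * a) + c"
    and "a * c = (q ^ 2) *\<^sub>C (c * a)"
    and "c * b = (q ^ 2) *\<^sub>C (b * c)"
    and "n \<ge> 1"
    and "\<forall>k \<in> {1..n}. qint q k \<noteq> 0"
  shows "(a + b) ^ n =
    (\<Sum>(\<alpha>, \<beta>, \<gamma>) \<in> {(\<alpha>, \<beta>, \<gamma>). (\<alpha>::nat) + 2 * \<beta> + \<gamma> = n}.
       (qfact q n / (qfact q \<alpha> * qfact q \<gamma> * qeven_prod q \<beta>))
         *\<^sub>C (b ^ \<alpha> * c ^ \<beta> * a ^ \<gamma>))"
proof -
  interpret q_commuting_triple q a b c
    using assms(2-5) by unfold_locales auto
  show ?thesis
    using power_expansion [OF assms(7)] by (simp add: exponent_triples_def expansion_coeff_def)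
qed

end
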